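(* Let $k\ge 4$, $n=2k-1$, $\lambda\in\overline{\mathcal{U}}_{T_n}$, and let $Y=\mathrm{KN}(S_\lambda)$, with $R_i$ its $i$-th row and $C_j$ its $j$-th column. Write the elements of $S_\lambda$ increasingly as $0=s_0<s_1<\cdots$ and let $z$ be the index with $s_z=n-2$. Then $\#R_i=\#C_i+1$ for every $1\le i\le z$, and $\#R_i=\#C_{i+1}$ for every $z+1\le i\le n-2$.
   Context: A partition of $N$ into distinct parts is a sequence $\lambda=(\lambda_1<\dots<\lambda_t)$ of positive integers with sum $N$ and $t\ge 2$, identified with its set of parts. Missing parts: $\mathcal{M}_\lambda=\{1,\dots,\lambda_t\}\setminus\lambda$. $\lambda$ is refinable if two distinct missing parts sum to a part of $\lambda$, unrefinable otherwise; $\mathcal{U}_N$ is the set of unrefinable partitions of $N$. An element of $\mathcal{U}_N$ is maximal if its largest part is the maximum of the largest parts of elements of $\mathcal{U}_N$; $\widetilde{\mathcal{U}}_N$ is the set of these and $\overline{\mathcal{U}}_N=\{\lambda\in\widetilde{\mathcal{U}}_N:\#\mathcal{M}_\lambda=\lfloor\lambda_t/2\rfloor\}$. $T_n=n(n+1)/2$. For $\lambda\in\overline{\mathcal{U}}_{T_n}$ (with $n=2k-1$, $k\ge 4$) one knows $\lambda_t=2n-4$, $t=n-2$ and $n-2\notin\lambda$. $S_\lambda=\mathbb{N}_0\setminus\lambda$. The Keith–Nath transformation sends a set $S\subseteq\mathbb{N}_0$ with $0\in S$ and finite complement to the Young diagram $\mathrm{KN}(S)$ whose boundary is the lattice path that,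 starting at the origin, takes for $j=0,1,\dots,\max(\mathbb{N}_0\setminus S)$ an east step if $j\in S$ and a north step otherwise. Diagrams are in English convention: rows numbered from the top, columns from the left; $\#R_i$, $\#C_j$ denote numbers of cells. *)

theory Defs
  imports Main "HOL-Library.Infinite_Set"
begin

(* A partition of N into distinct parts, identified with its (finite) set of parts;
   at least two parts. *)
definition distinct_partition :: "nat \<Rightarrow> nat set \<Rightarrow> bool" where
  "distinct_partition N lam \<longleftrightarrow>
     finite lam \<and> 0 \<notin> lam \<and> \<Sum>lam = N \<and> card lam \<ge> 2"

definition missing :: "nat set \<Rightarrow> nat set" where
  "missing lam = {1..Max lam} - lam"

definition refinable :: "nat set \<Rightarrow> bool" where
  "refinable lam \<longleftrightarrow> (\<exists>a\<in>missing lam. \<exists>b\<in>missing lam. a \<noteq> b \<and> a + b \<in> lam)"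

definition unrefinable_parts :: "nat \<Rightarrow> nat set set" where
  "unrefinable_parts N = {lam. distinct_partition N lam \<and> \<not> refinable lam}"

definition maximal_unrefinable :: "nat \<Rightarrow> nat set set" where
  "maximal_unrefinable N =
     {lam \<in> unrefinable_parts N. Max lam = Max (Max ` unrefinable_parts N)}"

definition Ubar :: "nat \<Rightarrow> nat set set" where
  "Ubar N = {lam \<in> maximal_unrefinable N. card (missing lam) = Max lam div 2}"

definition tri :: "nat \<Rightarrow> nat" where
  "tri n = n * (n + 1) div 2"

definition Sset :: "nat set \<Rightarrow> nat set" where
  "Sset lam = UNIV - lam"

(* The lattice path: step number j (j = 0..max gap)
   starts at the point (x_j, y_j) with x_j = #{s in S. s < j} and
   y_j = #{g not in S. g < j}; it is an east step if j in S, a north step otherwise.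
   The path ends at height b = #(N_0 \ S).  The Young diagram (English convention)
   consists of the unit cells to the left of the path, below height b:
   the cell in row i (from the top) and column j (from the left) is the unit square
   [j-1,j] x [b-i, b-i+1]; it belongs to the diagram iff it lies left of the
   north step at height b-i, i.e. j <= x_g for the gap g with y_g = b - i. *)
definition KN :: "nat set \<Rightarrow> (nat \<times> nat) set" where
  "KN S = {(i, j). 1 \<le> i \<and> i \<le> card (UNIV - S) \<and> 1 \<le> j \<and>
     (\<exists>g. g \<notin> S \<and> card {h. h \<notin> S \<and> h < g} = card (UNIV - S) - i
          \<and> j \<le> card {s \<in> S. s < g})}"

definition row_card :: "(nat \<times> nat) set \<Rightarrow> nat \<Rightarrow> nat" where
  "row_card Y i = card {j. (i, j) \<in> Y}"

definition col_card :: "(nat \<times> nat) set \<Rightarrow> nat \<Rightarrow> nat" where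
  "col_card Y j = card {i. (i, j) \<in> Y}"

end

theory Submission
  imports Defs
begin

(* Let m be the largest part of an unrefinable partition lam with card (missing lam) = m div 2.
   Folding x to min x (m - x) is injective on the missing parts (two missing parts with sum m
   would refine lam), so it maps them onto {1..m div 2}: for 0 < x < m with 2 x ~= m exactly one
   of x and m - x is a part, and m/2 is not.  Pairing the parts accordingly gives
   N = m + T((m - 1) div 2) + E, where the excess E has the parity of m and is never 2 for odd m;
   for N = T n this rules out m > 2 n - 4, and {1..n-3} u {n+1, 2n-4} attains 2 n - 4.
   For m = 2 h, h = n - 2, the reflection x -> 2 h - x maps the parts above s onto the
   non-parts below 2 h - s other than h.  In KN(S_lam) the row of a part g has length
   #{s in S_lam. s < g}, and column j + 1 has one cell for each part above s_j.  Taking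
   g = 2 h - s_(i-1), resp. g = 2 h - s_i, row and column count the same non-parts, except
   that the row also counts h exactly when i <= z. *)

lemma card_less_enumerate:
  fixes S :: "nat set"
  assumes "infinite S"
  shows "card {s\<in>S. s < enumerate S k} = k"
proof -
  have "{s\<in>S. s < enumerate S k} = enumerate S ` {..<k}"
  proof (intro set_eqI iffI)
    fix s assume s: "s \<in> {s\<in>S. s < enumerate S k}"
    then obtain i where "s = enumerate S i"
      using enumerate_Ex[OF assms] by blast
    with s show "s \<in> enumerate S ` {..<k}"
      using assms by auto
  qed (use assms enumerate_in_set in auto)
  then show ?thesis
    using inj_on_subset[OF inj_enumerate[OF assms] subset_UNIV] by (simp add: card_image)
qed

lemma enumerate_less_iff:
  fixes S :: "nat set"
  assumes "infinite S"
  shows "enumerate S j < g \<longleftrightarrow> j < card {s\<in>S. s < g}"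
proof
  assume "enumerate S j < g"
  then have "insert (enumerate S j) {s\<in>S. s < enumerate S j} \<subseteq> {s\<in>S. s < g}"
    using enumerate_in_set[OF assms] by auto
  then have "card (insert (enumerate S j) {s\<in>S. s < enumerate S j}) \<le> card {s\<in>S. s < g}"
    by (rule card_mono[rotated]) simp
  then show "j < card {s\<in>S. s < g}"
    using card_less_enumerate[OF assms, of j] by simp
next
  assume "j < card {s\<in>S. s < g}"
  show "enumerate S j < g"
  proof (rule ccontr)
    assume "\<not> enumerate S j < g"
    then have "card {s\<in>S. s < g} \<le> card {s\<in>S. s < enumerate S j}"
      by (intro card_mono) auto
    with \<open>j < card {s\<in>S. s < g}\<close> show False
      using card_less_enumerate[OF assms, of j] by simp
  qed
qed

lemma Sset_iff [simp]: "s \<in> Sset lam \<longleftrightarrow> s \<notin> lam"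
  by (simp add: Sset_def)

lemma infinite_Sset: "finite lam \<Longrightarrow> infinite (Sset lam)"
  by (simp add: Sset_def Diff_infinite_finite)

lemma card_parts_split:
  fixes lam :: "nat set"
  assumes "finite lam" and "g \<in> lam"
  shows "card {x\<in>lam. x < g} + card {x\<in>lam. g < x} + 1 = card lam"
proof -
  have "lam = insert g ({x\<in>lam. x < g} \<union> {x\<in>lam. g < x})"
    using assms(2) by auto
  also have "card \<dots> = card {x\<in>lam. x < g} + card {x\<in>lam. g < x} + 1"
    using assms(1) by (simp add: card_Un_disjoint disjoint_iff)
  finally show ?thesis by simp
qed

lemma inj_on_card_greater:
  fixes lam :: "nat set"
  assumes "finite lam"
  shows "inj_on (\<lambda>g. card {x\<in>lam. g < x}) lam"
proof (rule linorder_inj_onI')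
  fix g g' assume "g \<in> lam" "g' \<in> lam" "g < g'"
  then have "{x\<in>lam. g' < x} \<subset> {x\<in>lam. g < x}" by auto
  then have "card {x\<in>lam. g' < x} < card {x\<in>lam. g < x}"
    using assms by (simp add: psubset_card_mono)
  then show "card {x\<in>lam. g < x} \<noteq> card {x\<in>lam. g' < x}" by simp
qed

lemma mem_KN_Sset:
  fixes lam :: "nat set"
  assumes "finite lam"
  shows "(i, j) \<in> KN (Sset lam) \<longleftrightarrow>
    1 \<le> j \<and> (\<exists>g\<in>lam. i = card {x\<in>lam. g < x} + 1 \<and> j \<le> card {s\<in>Sset lam. s < g})"
proof -
  have gaps: "UNIV - Sset lam = lam"
    by (auto simp: Sset_def)
  have row: "1 \<le> i \<and> i \<le> card lam \<and> card {x\<in>lam. x < g} = card lam - i \<longleftrightarrow>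
      i = card {x\<in>lam. g < x} + 1" if "g \<in> lam" for g
    using card_parts_split[OF assms that] by linarith
  have "(i, j) \<in> KN (Sset lam) \<longleftrightarrow> 1 \<le> j \<and> (\<exists>g\<in>lam.
      (1 \<le> i \<and> i \<le> card lam \<and> card {x\<in>lam. x < g} = card lam - i) \<and>
      j \<le> card {s\<in>Sset lam. s < g})"
    by (auto simp: KN_def gaps)
  also have "\<dots> \<longleftrightarrow> 1 \<le> j \<and>
      (\<exists>g\<in>lam. i = card {x\<in>lam. g < x} + 1 \<and> j \<le> card {s\<in>Sset lam. s < g})"
    using row by auto
  finally show ?thesis .
qed

lemma row_card_KN_Sset:
  fixes lam :: "nat set"
  assumes "finite lam" and "g \<in> lam"
  shows "row_card (KN (Sset lam)) (card {x\<in>lam. g < x} + 1) = card {s\<in>Sset lam. s < g}"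
proof -
  have "g' = g" if "g' \<in> lam" "card {x\<in>lam. g' < x} = card {x\<in>lam. g < x}" for g'
    using inj_on_card_greater[OF assms(1)] that assms(2) by (auto dest: inj_onD)
  then have "{j. (card {x\<in>lam. g < x} + 1, j) \<in> KN (Sset lam)} = {1..card {s\<in>Sset lam. s < g}}"
    using assms(2) by (auto simp: mem_KN_Sset[OF assms(1)])
  then show ?thesis
    unfolding row_card_def by simp
qed

lemma col_card_KN_Sset:
  fixes lam :: "nat set"
  assumes "finite lam"
  shows "col_card (KN (Sset lam)) (Suc j) = card {g\<in>lam. enumerate (Sset lam) j < g}"
proof -
  let ?row = "\<lambda>g. card {x\<in>lam. g < x} + 1"
  have "{i. (i, Suc j) \<in> KN (Sset lam)} = ?row ` {g\<in>lam. enumerate (Sset lam) j < g}"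
    by (auto simp: mem_KN_Sset[OF assms] enumerate_less_iff[OF infinite_Sset[OF assms]]
        Suc_le_eq)
  moreover have "inj_on ?row {g\<in>lam. enumerate (Sset lam) j < g}"
    using inj_on_card_greater[OF assms] by (auto simp: inj_on_def)
  ultimately show ?thesis
    unfolding col_card_def by (simp add: card_image)
qed

definition mirror_complementary :: "nat \<Rightarrow> nat set \<Rightarrow> bool" where
  "mirror_complementary m lam \<longleftrightarrow>
     (\<forall>x. 0 < x \<and> x < m \<and> 2 * x \<noteq> m \<longrightarrow> (x \<in> lam \<longleftrightarrow> m - x \<notin> lam))"

lemma min_mirror_mem_half:
  fixes m :: nat
  assumes "0 < x" and "x < m"
  shows "min x (m - x) \<in> {1..m div 2}"
  using assms by (auto simp: min_def less_eq_div_iff_mult_less_eq)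

lemma min_mirror_mem_below_half:
  fixes m :: nat
  assumes "0 < x" and "x < m" and "2 * x \<noteq> m"
  shows "min x (m - x) \<in> {1..(m - 1) div 2}"
  using assms by (auto simp: min_def less_eq_div_iff_mult_less_eq)

lemma bij_betw_missing_fold:
  fixes lam :: "nat set"
  assumes fin: "finite lam" and ne: "lam \<noteq> {}" and unref: "\<not> refinable lam"
    and card_missing: "card (missing lam) = Max lam div 2"
  shows "bij_betw (\<lambda>x. min x (Max lam - x)) (missing lam) {1..Max lam div 2}"
proof -
  define m where "m = Max lam"
  have "m \<in> lam"
    using fin ne by (simp add: m_def)
  have missing: "missing lam = {1..m} - lam"
    by (simp add: missing_def m_def)
  have bounds: "1 \<le> a \<and> a < m" if "a \<in> missing lam" for a
    using that \<open>m \<in> lam\<close> by (auto simp: missing order.order_iff_strict)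
  have inj: "inj_on (\<lambda>x. min x (m - x)) (missing lam)"
  proof (rule inj_onI)
    fix a b
    assume a: "a \<in> missing lam" and b: "b \<in> missing lam" and fold: "min a (m - a) = min b (m - b)"
    show "a = b"
    proof (rule ccontr)
      assume "a \<noteq> b"
      with bounds[OF a] bounds[OF b] fold have "a + b = m"
        by (auto simp: min_def split: if_splits)
      with a b \<open>a \<noteq> b\<close> \<open>m \<in> lam\<close> unref show False
        unfolding refinable_def by metis
    qed
  qed
  have "(\<lambda>x. min x (m - x)) ` missing lam \<subseteq> {1..m div 2}"
    using bounds min_mirror_mem_half by fastforce
  moreover have "card ((\<lambda>x. min x (m - x)) ` missing lam) = card {1..m div 2}"
    using inj card_missing by (simp add: card_image m_def)
  ultimately have "(\<lambda>x. min x (m - x)) ` missing lam = {1..m div 2}"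
    by (intro card_subset_eq) auto
  with inj show ?thesis
    by (simp add: bij_betw_def m_def)
qed

lemma unrefinable_mirror_complementary:
  fixes lam :: "nat set"
  assumes fin: "finite lam" and ne: "lam \<noteq> {}" and unref: "\<not> refinable lam"
    and card_missing: "card (missing lam) = Max lam div 2"
  shows "mirror_complementary (Max lam) lam"
  unfolding mirror_complementary_def
proof (intro allI impI)
  fix x assume x: "0 < x \<and> x < Max lam \<and> 2 * x \<noteq> Max lam"
  define m where "m = Max lam"
  have "m \<in> lam"
    using fin ne by (simp add: m_def)
  have missing: "missing lam = {1..m} - lam"
    by (simp add: missing_def m_def)
  have onto: "(\<lambda>x. min x (m - x)) ` missing lam = {1..m div 2}"
    using bij_betw_imp_surj_on[OF bij_betw_missing_fold[OF assms]] by (simp add: m_def)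
  show "x \<in> lam \<longleftrightarrow> Max lam - x \<notin> lam"
  proof
    assume "x \<in> lam"
    have "min x (m - x) \<in> {1..m div 2}"
      using x min_mirror_mem_half by (simp add: m_def)
    then obtain a where a: "a \<in> missing lam" "min a (m - a) = min x (m - x)"
      unfolding onto[symmetric] by (auto simp del: atLeastAtMost_iff)
    then have "a = x \<or> a = m - x"
      using x by (auto simp: missing min_def m_def split: if_splits)
    with a(1) \<open>x \<in> lam\<close> show "Max lam - x \<notin> lam"
      by (auto simp: missing m_def)
  next
    assume "Max lam - x \<notin> lam"
    show "x \<in> lam"
    proof (rule ccontr)
      assume "x \<notin> lam"
      with x \<open>Max lam - x \<notin> lam\<close> have "x \<in> missing lam" "m - x \<in> missing lam" "x \<noteq> m - x"
        by (auto simp: missing m_def)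
      with \<open>m \<in> lam\<close> x unref show False
        unfolding refinable_def m_def by (metis le_add_diff_inverse less_imp_le_nat)
    qed
  qed
qed

lemma unrefinable_half_notin:
  fixes lam :: "nat set"
  assumes fin: "finite lam" and ne: "lam \<noteq> {}" and unref: "\<not> refinable lam"
    and card_missing: "card (missing lam) = Max lam div 2"
    and "0 \<notin> lam" and "even (Max lam)"
  shows "Max lam div 2 \<notin> lam"
proof (cases "Max lam = 0")
  case False
  define m where "m = Max lam"
  then have "m div 2 \<in> {1..m div 2}"
    using False \<open>even (Max lam)\<close> by auto
  moreover have "(\<lambda>x. min x (m - x)) ` missing lam = {1..m div 2}"
    using bij_betw_imp_surj_on[OF bij_betw_missing_fold[OF fin ne unref card_missing]]
    by (simp add: m_def)
  ultimately obtain a where a: "a \<in> missing lam" "min a (m - a) = m div 2"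
    by (metis imageE)
  then have "a = m div 2"
    using \<open>even (Max lam)\<close> by (auto simp: missing_def m_def min_def split: if_splits)
  with a(1) show ?thesis
    by (simp add: missing_def m_def)
qed (use \<open>0 \<notin> lam\<close> in simp)

lemma mirror_notin_iff:
  fixes lam :: "nat set"
  assumes parts: "lam \<subseteq> {1..m}" and top: "m \<in> lam" and mirror: "mirror_complementary m lam"
    and "y \<le> m" and "2 * y \<noteq> m"
  shows "y \<notin> lam \<longleftrightarrow> m - y \<in> lam"
proof -
  have "0 \<notin> lam"
    using parts by auto
  consider "y = 0" | "y = m" | "0 < y" "y < m"
    using \<open>y \<le> m\<close> by linarith
  then show ?thesis
  proof cases
    case 3
    with mirror \<open>2 * y \<noteq> m\<close> show ?thesis
      unfolding mirror_complementary_def by blast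
  qed (use \<open>0 \<notin> lam\<close> top in auto)
qed

lemma bij_betw_parts_fold:
  fixes lam :: "nat set"
  assumes parts: "lam \<subseteq> {1..m}" and top: "m \<in> lam" and mirror: "mirror_complementary m lam"
    and half: "even m \<Longrightarrow> m div 2 \<notin> lam"
  shows "bij_betw (\<lambda>x. min x (m - x)) (lam - {m}) {1..(m - 1) div 2}"
proof -
  have no_half: "2 * x \<noteq> m" if "x \<in> lam" for x
    using half that by auto
  have bounds: "1 \<le> x \<and> x < m" if "x \<in> lam - {m}" for x
    using parts that by fastforce
  have inj: "inj_on (\<lambda>x. min x (m - x)) (lam - {m})"
  proof (rule inj_onI)
    fix a b
    assume a: "a \<in> lam - {m}" and b: "b \<in> lam - {m}" and fold: "min a (m - a) = min b (m - b)"
    show "a = b"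
    proof (rule ccontr)
      assume "a \<noteq> b"
      with fold bounds[OF a] bounds[OF b] have "b = m - a"
        by (auto simp: min_def split: if_splits)
      with a b bounds[OF a] no_half[of a] mirror_notin_iff[OF parts top mirror, of a] show False
        by auto
    qed
  qed
  have "(\<lambda>x. min x (m - x)) ` (lam - {m}) = {1..(m - 1) div 2}"
  proof
    show "(\<lambda>x. min x (m - x)) ` (lam - {m}) \<subseteq> {1..(m - 1) div 2}"
    proof (rule image_subsetI)
      fix x assume "x \<in> lam - {m}"
      with bounds[of x] no_half[of x] show "min x (m - x) \<in> {1..(m - 1) div 2}"
        by (intro min_mirror_mem_below_half) auto
    qed
  next
    show "{1..(m - 1) div 2} \<subseteq> (\<lambda>x. min x (m - x)) ` (lam - {m})"
    proof
      fix y assume y: "y \<in> {1..(m - 1) div 2}"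
      then have "0 < y" "y < m" "2 * y \<noteq> m"
        by auto
      then have "y \<in> lam \<or> m - y \<in> lam"
        using mirror_notin_iff[OF parts top mirror, of y] by auto
      moreover have "y \<le> m - y"
        using y by auto
      ultimately show "y \<in> (\<lambda>x. min x (m - x)) ` (lam - {m})"
      proof (elim disjE)
        assume "y \<in> lam"
        with \<open>y < m\<close> \<open>y \<le> m - y\<close> show ?thesis
          by (intro rev_image_eqI[of y]) auto
      next
        assume "m - y \<in> lam"
        with \<open>0 < y\<close> \<open>y < m\<close> \<open>y \<le> m - y\<close> show ?thesis
          by (intro rev_image_eqI[of "m - y"]) auto
      qed
    qed
  qed
  with inj show ?thesis
    by (simp add: bij_betw_def)
qed

(* Truncated subtraction: 2 * x - m is the excess of x over its mirror image m - x, and 0 for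
   the smaller element of each pair. *)
lemma sum_mirror_complementary:
  fixes lam :: "nat set"
  assumes parts: "lam \<subseteq> {1..m}" and top: "m \<in> lam" and mirror: "mirror_complementary m lam"
    and half: "even m \<Longrightarrow> m div 2 \<notin> lam"
  shows "\<Sum>lam = m + \<Sum>{1..(m - 1) div 2} + (\<Sum>x\<in>lam - {m}. 2 * x - m)"
proof -
  have "finite lam"
    using parts finite_subset by blast
  moreover have "x = min x (m - x) + (2 * x - m)" if "x \<in> lam" for x
  proof -
    have "x \<le> m"
      using parts that by auto
    then show ?thesis
      by (simp add: min_def)
  qed
  ultimately have "\<Sum>lam = m + (\<Sum>x\<in>lam - {m}. min x (m - x) + (2 * x - m))"
    by (subst sum.remove[OF _ top]) (auto intro!: sum.cong)
  also have "\<dots> = m + \<Sum>{1..(m - 1) div 2} + (\<Sum>x\<in>lam - {m}. 2 * x - m)"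
    using sum.reindex_bij_betw[OF bij_betw_parts_fold[OF assms], of id]
    by (simp add: sum.distrib)
  finally show ?thesis .
qed

lemma even_sum_excess:
  fixes m :: nat
  assumes "even m"
  shows "even (\<Sum>x\<in>L. 2 * x - m)"
  using assms by (intro dvd_sum) (auto simp: dvd_diff_nat)

lemma sum_excess_neq_2:
  fixes m :: nat
  assumes "odd m" and "finite L"
  shows "(\<Sum>x\<in>L. 2 * x - m) \<noteq> 2"
proof -
  define B where "B = {x\<in>L. m < 2 * x}"
  have odd_B: "odd (2 * x - m)" if "x \<in> B" for x
    using that \<open>odd m\<close> by (auto simp: B_def)
  have "(\<Sum>x\<in>L. 2 * x - m) = (\<Sum>x\<in>B. 2 * x - m)"
    using \<open>finite L\<close> by (intro sum.mono_neutral_right) (auto simp: B_def)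
  moreover have "(\<Sum>x\<in>B. 2 * x - m) \<noteq> 2"
  proof (cases "\<exists>x y. x \<in> B \<and> y \<in> B \<and> x \<noteq> y")
    case True
    then obtain x y where xy: "x \<in> B" "y \<in> B" "x \<noteq> y"
      by blast
    then have "2 * x - m \<noteq> 2 * y - m"
      by (auto simp: B_def)
    with odd_B[OF xy(1)] odd_B[OF xy(2)] have "4 \<le> (2 * x - m) + (2 * y - m)"
      by presburger
    also have "\<dots> = (\<Sum>z\<in>{x, y}. 2 * z - m)"
      using xy(3) by simp
    also have "\<dots> \<le> (\<Sum>z\<in>B. 2 * z - m)"
      using \<open>finite L\<close> xy by (intro sum_mono2) (auto simp: B_def)
    finally show ?thesis
      by linarith
  next
    case False
    then have "B = {} \<or> (\<exists>x. B = {x})"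
      by blast
    with odd_B show ?thesis
      by fastforce
  qed
  ultimately show ?thesis by simp
qed

lemma double_sum_atLeast1: "2 * \<Sum>{1..p} = p * (p + 1 :: nat)"
  using double_gauss_sum_from_Suc_0[of p, where 'a = nat] by simp

lemma double_tri: "2 * tri n = n * (n + 1)"
  by (simp add: tri_def)

lemma finite_unrefinable_parts: "finite (unrefinable_parts N)"
proof (rule finite_subset)
  show "unrefinable_parts N \<subseteq> Pow {..N}"
  proof
    fix lam assume "lam \<in> unrefinable_parts N"
    then have "finite lam" "\<Sum>lam = N"
      by (auto simp: unrefinable_parts_def distinct_partition_def)
    then show "lam \<in> Pow {..N}"
      using member_le_sum[of _ lam id] by auto
  qed
qed simp

lemma unrefinable_witness:
  fixes n :: nat
  assumes "6 \<le> n"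
  shows "{1..n - 3} \<union> {n + 1, 2 * n - 4} \<in> unrefinable_parts (tri n)"
    and "Max ({1..n - 3} \<union> {n + 1, 2 * n - 4}) = 2 * n - 4"
proof -
  define mu where "mu = {1..n - 3} \<union> {n + 1, 2 * n - 4}"
  have "finite mu" "0 \<notin> mu"
    using assms by (auto simp: mu_def)
  have Max_mu: "Max mu = 2 * n - 4"
    using assms by (intro Max_eqI) (auto simp: mu_def)
  have "mu = insert (n + 1) (insert (2 * n - 4) {1..n - 3})"
    by (auto simp: mu_def)
  moreover have "n + 1 \<notin> insert (2 * n - 4) {1..n - 3}" "2 * n - 4 \<notin> {1..n - 3}"
    using assms by auto
  ultimately have "2 * \<Sum>mu = 2 * \<Sum>{1..n - 3} + 2 * (n + 1) + 2 * (2 * n - 4)"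
    by simp
  also have "\<dots> = n * (n + 1)"
    using assms unfolding double_sum_atLeast1
    by (cases n rule: nat_induct_at_least[of 6]) (auto simp: algebra_simps)
  finally have "\<Sum>mu = tri n"
    using double_tri[of n] by simp
  moreover have "card mu \<ge> 2"
    using card_mono[OF \<open>finite mu\<close>, of "{n + 1, 2 * n - 4}"] assms by (auto simp: mu_def)
  moreover have "\<not> refinable mu"
  proof
    assume "refinable mu"
    then obtain a b where ab: "a \<in> missing mu" "b \<in> missing mu" "a \<noteq> b" "a + b \<in> mu"
      unfolding refinable_def by blast
    have "n - 2 \<le> x" if "x \<in> missing mu" for x
      using that by (auto simp: missing_def mu_def)
    with ab have "n - 2 \<le> a" "n - 2 \<le> b"
      by auto
    moreover have "a + b \<le> Max mu"
      using \<open>finite mu\<close> ab(4) by simp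
    ultimately show False
      using Max_mu assms ab(3) by arith
  qed
  ultimately show "mu \<in> unrefinable_parts (tri n)" "Max mu = 2 * n - 4"
    using \<open>finite mu\<close> \<open>0 \<notin> mu\<close> Max_mu
    by (auto simp: unrefinable_parts_def distinct_partition_def)
qed

lemma unrefinable_parts_D:
  assumes "lam \<in> unrefinable_parts N"
  shows "finite lam" "0 \<notin> lam" "\<Sum>lam = N" "lam \<noteq> {}" "\<not> refinable lam"
  using assms by (auto simp: unrefinable_parts_def distinct_partition_def)

lemma Max_unrefinable_tri_le:
  fixes lam :: "nat set"
  assumes "2 \<le> n" and lam: "lam \<in> unrefinable_parts (tri n)"
    and card_missing: "card (missing lam) = Max lam div 2"
  shows "Max lam \<le> 2 * n - 4"
proof (rule ccontr)
  assume "\<not> Max lam \<le> 2 * n - 4"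
  note facts = unrefinable_parts_D[OF lam]
  define m where "m = Max lam"
  define p where "p = (m - 1) div 2"
  define D where "D = (\<Sum>x\<in>lam - {m}. 2 * x - m)"
  have top: "m \<in> lam" and parts: "lam \<subseteq> {1..m}"
    using facts by (auto simp: m_def Suc_le_eq intro!: gr0I)
  have "\<Sum>lam = m + \<Sum>{1..p} + D"
    unfolding p_def D_def
    using sum_mirror_complementary[OF parts top]
      unrefinable_mirror_complementary[OF facts(1,4,5) card_missing]
      unrefinable_half_notin[OF facts(1,4,5) card_missing facts(2)]
    by (simp add: m_def)
  then have key: "n * (n + 1) = 2 * m + p * (p + 1) + 2 * D"
    using facts(3) double_tri[of n] double_sum_atLeast1[of p] by simp
  obtain q where q: "n = q + 2"
    using \<open>2 \<le> n\<close> le_Suc_ex by (metis add.commute)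
  have "2 * q < m"
    using \<open>\<not> Max lam \<le> 2 * n - 4\<close> q by (simp add: m_def)
  then consider "m = 2 * q + 1" | "m = 2 * q + 2" | "2 * q + 3 \<le> m"
    by linarith
  then show False
  proof cases
    case 1
    with key q have "D = 2"
      by (simp add: p_def algebra_simps)
    moreover have "odd m"
      using 1 by simp
    ultimately show False
      using sum_excess_neq_2[of m "lam - {m}"] facts(1) by (simp add: D_def)
  next
    case 2
    with key q have "D = 1"
      by (simp add: p_def algebra_simps)
    moreover have "even m"
      using 2 by simp
    ultimately show False
      using even_sum_excess[of m "lam - {m}"] by (simp add: D_def)
  next
    case 3
    then have "q + 1 \<le> p"
      by (simp add: p_def)
    then have "(q + 1) * (q + 2) \<le> p * (p + 1)"
      by (intro mult_le_mono) auto
    with key q 3 show False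
      by (simp add: algebra_simps)
  qed
qed

lemma Max_Ubar_tri:
  fixes lam :: "nat set"
  assumes "6 \<le> n" and "lam \<in> Ubar (tri n)"
  shows "Max lam = 2 * n - 4"
proof (rule antisym)
  have lam: "lam \<in> unrefinable_parts (tri n)"
    and maximal: "Max lam = Max (Max ` unrefinable_parts (tri n))"
    and card_missing: "card (missing lam) = Max lam div 2"
    using assms(2) by (auto simp: Ubar_def maximal_unrefinable_def)
  show "Max lam \<le> 2 * n - 4"
    using Max_unrefinable_tri_le[OF _ lam card_missing] assms(1) by simp
  let ?mu = "{1..n - 3} \<union> {n + 1, 2 * n - 4}"
  have "Max ?mu \<in> Max ` unrefinable_parts (tri n)"
    using unrefinable_witness(1)[OF assms(1)] by blast
  then have "Max ?mu \<le> Max lam"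
    unfolding maximal by (rule Max_ge[OF finite_imageI[OF finite_unrefinable_parts]])
  then show "2 * n - 4 \<le> Max lam"
    unfolding unrefinable_witness(2)[OF assms(1)] .
qed

context
  fixes lam :: "nat set" and h :: nat
  assumes parts: "lam \<subseteq> {1..2 * h}" and top: "2 * h \<in> lam"
    and mirror: "mirror_complementary (2 * h) lam" and half: "h \<notin> lam"
begin

lemma finite_mirror_parts: "finite lam"
  using parts finite_subset by blast

lemma card_greater_parts_mirror:
  "card {x\<in>lam. s < x} = card ({y\<in>Sset lam. y < 2 * h - s} - {h})"
proof -
  have reflect: "y \<notin> lam \<longleftrightarrow> 2 * h - y \<in> lam" if "y \<le> 2 * h" "y \<noteq> h" for y
    using mirror_notin_iff[OF parts top mirror that(1)] that(2) by simp
  have "{y\<in>Sset lam. y < 2 * h - s} - {h} = (\<lambda>x. 2 * h - x) ` {x\<in>lam. s < x}"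
  proof (intro set_eqI iffI)
    fix y assume y: "y \<in> {y\<in>Sset lam. y < 2 * h - s} - {h}"
    then have "2 * h - y \<in> {x\<in>lam. s < x}"
      using reflect[of y] by auto
    with y show "y \<in> (\<lambda>x. 2 * h - x) ` {x\<in>lam. s < x}"
      by (intro rev_image_eqI[of "2 * h - y"]) auto
  next
    fix y assume "y \<in> (\<lambda>x. 2 * h - x) ` {x\<in>lam. s < x}"
    then obtain x where x: "x \<in> lam" "s < x" "y = 2 * h - x"
      by blast
    moreover have "x \<le> 2 * h" "x \<noteq> h"
      using parts half x(1) by auto
    ultimately have "y \<le> 2 * h" "y \<noteq> h" "2 * h - y = x"
      by auto
    with x reflect[of y] show "y \<in> {y\<in>Sset lam. y < 2 * h - s} - {h}"
      by auto
  qed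
  moreover have "inj_on (\<lambda>x. 2 * h - x) {x\<in>lam. s < x}"
  proof (rule inj_onI)
    fix x x' assume "x \<in> {x\<in>lam. s < x}" "x' \<in> {x\<in>lam. s < x}" "2 * h - x = 2 * h - x'"
    moreover from this have "x \<le> 2 * h" "x' \<le> 2 * h"
      using parts by auto
    ultimately show "x = x'"
      by linarith
  qed
  ultimately show ?thesis
    by (simp add: card_image)
qed

lemma card_Sset_below_top: "card {y\<in>Sset lam. y < 2 * h} = h + 1"
proof -
  have "card (lam - {2 * h}) = h - 1"
    using bij_betw_same_card[OF bij_betw_parts_fold[OF parts top mirror]] half by simp
  moreover have "{y\<in>Sset lam. y < 2 * h} = {..<2 * h} - (lam - {2 * h})"
    using parts by auto
  moreover have "lam - {2 * h} \<subseteq> {..<2 * h}" "1 \<le> h"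
    using parts top by fastforce+
  ultimately show ?thesis
    using finite_mirror_parts by (simp add: card_Diff_subset)
qed

lemma enumerate_Sset_less_top:
  assumes "i \<le> h"
  shows "enumerate (Sset lam) i < 2 * h"
  using assms card_Sset_below_top
  by (simp add: enumerate_less_iff[OF infinite_Sset[OF finite_mirror_parts]])

lemma row_card_KN_eq_Suc_col_card:
  assumes z: "enumerate (Sset lam) z = h" and i: "1 \<le> i" "i \<le> z"
  shows "row_card (KN (Sset lam)) i = col_card (KN (Sset lam)) i + 1"
proof -
  let ?S = "Sset lam"
  define s where "s = enumerate ?S (i - 1)"
  have inf: "infinite ?S"
    using infinite_Sset[OF finite_mirror_parts] .
  have "s < h" "s \<in> ?S"
    using i z inf by (auto simp: s_def enumerate_in_set simp del: Sset_iff)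
  then have g: "2 * h - s \<in> lam"
    using mirror_notin_iff[OF parts top mirror, of s] by simp
  have "card {x\<in>lam. 2 * h - s < x} = card ({y\<in>?S. y < s} - {h})"
    using card_greater_parts_mirror[of "2 * h - s"] \<open>s < h\<close> by simp
  also have "{y\<in>?S. y < s} - {h} = {y\<in>?S. y < s}"
    using \<open>s < h\<close> by auto
  also have "card \<dots> = i - 1"
    unfolding s_def by (rule card_less_enumerate[OF inf])
  finally have "row_card (KN ?S) i = card {y\<in>?S. y < 2 * h - s}"
    using row_card_KN_Sset[OF finite_mirror_parts g] i by simp
  moreover have "col_card (KN ?S) i = card ({y\<in>?S. y < 2 * h - s} - {h})"
    using col_card_KN_Sset[OF finite_mirror_parts, of "i - 1"] card_greater_parts_mirror[of s] i
    by (simp add: s_def)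
  moreover have "h \<in> {y\<in>?S. y < 2 * h - s}"
    using \<open>s < h\<close> half by simp
  ultimately show ?thesis
    using card_Suc_Diff1[of "{y\<in>?S. y < 2 * h - s}" h] by simp
qed

lemma row_card_KN_eq_col_card_Suc:
  assumes z: "enumerate (Sset lam) z = h" and i: "z < i" "i \<le> h"
  shows "row_card (KN (Sset lam)) i = col_card (KN (Sset lam)) (i + 1)"
proof -
  let ?S = "Sset lam"
  define s where "s = enumerate ?S i"
  have inf: "infinite ?S"
    using infinite_Sset[OF finite_mirror_parts] .
  have "h < s" "s \<in> ?S" "s < 2 * h"
    using i z inf enumerate_Sset_less_top[OF i(2)]
    by (auto simp: s_def enumerate_in_set simp del: Sset_iff)
  then have g: "2 * h - s \<in> lam"
    using mirror_notin_iff[OF parts top mirror, of s] by simp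
  have "card {x\<in>lam. 2 * h - s < x} = card ({y\<in>?S. y < s} - {h})"
    using card_greater_parts_mirror[of "2 * h - s"] \<open>s < 2 * h\<close> by simp
  also have "\<dots> = i - 1"
    using card_less_enumerate[OF inf, of i] \<open>h < s\<close> half
    by (simp add: s_def card_Diff_singleton)
  finally have "row_card (KN ?S) i = card {y\<in>?S. y < 2 * h - s}"
    using row_card_KN_Sset[OF finite_mirror_parts g] i by simp
  moreover have "col_card (KN ?S) (i + 1) = card ({y\<in>?S. y < 2 * h - s} - {h})"
    using col_card_KN_Sset[OF finite_mirror_parts, of i] card_greater_parts_mirror[of s]
    by (simp add: s_def)
  moreover have "{y\<in>?S. y < 2 * h - s} - {h} = {y\<in>?S. y < 2 * h - s}"
    using \<open>h < s\<close> by auto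
  ultimately show ?thesis
    by simp
qed

end

lemma Ubar_tri_mirror_complementary:
  fixes lam :: "nat set"
  assumes "6 \<le> n" and "lam \<in> Ubar (tri n)"
  shows "lam \<subseteq> {1..2 * (n - 2)}" and "2 * (n - 2) \<in> lam"
    and "mirror_complementary (2 * (n - 2)) lam" and "n - 2 \<notin> lam"
proof -
  have lam: "lam \<in> unrefinable_parts (tri n)"
    and card_missing: "card (missing lam) = Max lam div 2"
    using assms(2) by (auto simp: Ubar_def maximal_unrefinable_def)
  note facts = unrefinable_parts_D[OF lam]
  have Max: "Max lam = 2 * (n - 2)"
    using Max_Ubar_tri[OF assms] by simp
  show "lam \<subseteq> {1..2 * (n - 2)}"
    using facts(1,2) Max by (auto simp: Suc_le_eq intro!: gr0I simp flip: Max)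
  show "2 * (n - 2) \<in> lam"
    using facts(1,4) Max by (auto simp flip: Max)
  show "mirror_complementary (2 * (n - 2)) lam"
    using unrefinable_mirror_complementary[OF facts(1,4,5) card_missing] Max by simp
  show "n - 2 \<notin> lam"
    using unrefinable_half_notin[OF facts(1,4,5) card_missing facts(2)] Max by simp
qed

theorem lemma3p6:
  fixes k n z :: nat and lam :: "nat set"
  assumes "k \<ge> 4" and "n = 2 * k - 1"
    and "lam \<in> Ubar (tri n)"
    and "enumerate (Sset lam) z = n - 2"
  shows "(\<forall>i. 1 \<le> i \<and> i \<le> z \<longrightarrow>
            row_card (KN (Sset lam)) i = col_card (KN (Sset lam)) i + 1)
       \<and> (\<forall>i. z + 1 \<le> i \<and> i \<le> n - 2 \<longrightarrow>
            row_card (KN (Sset lam)) i = col_card (KN (Sset lam)) (i + 1))"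
proof -
  have "6 \<le> n"
    using assms(1,2) by simp
  note mirror = Ubar_tri_mirror_complementary[OF this assms(3)]
  show ?thesis
    using row_card_KN_eq_Suc_col_card[OF mirror assms(4)]
      row_card_KN_eq_col_card_Suc[OF mirror assms(4)]
    by auto
qed

end
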